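(* Let $b\ge2$, $n\ge1$ be integers and $\mathcal D=\{d,\dots,d+b-1\}$ a set of consecutive integers containing $0$. The state space of the $n$-carry process over $(-b,\mathcal D)$ is $\Omega_n(-b,\mathcal D)=\{s,s+1,\dots,t\}$ with $$s=-\lceil (n-1)(-l)\rceil=\lfloor (n-1)l\rfloor,\qquad t=\lceil (n-1)(l+1)\rceil,\qquad l=\frac{-d-b}{b+1}.$$ Consequently $\#\Omega_n(-b,\mathcal D)=n+1$ if $(n-1)l\notin\mathbb Z$ and $=n$ if $(n-1)l\in\mathbb Z$.
   Context: Carries process over the negative base $(-b,\mathcal D)$: let $\{X_{k,i}\}_{1\le k\le n,\ i\ge0}$ be independent random variables, each uniformly distributed on $\mathcal D$. Set $C_0=0$; for $i\ge0$ let $A_i$ be the unique element of $\mathcal D$ with $A_i\equiv C_i+X_{1,i}+\dots+X_{n,i}\pmod b$, and set $C_{i+1}=(C_i+X_{1,i}+\dots+X_{n,i}-A_i)/(-b)$. The state space $\Omega_n(-b,\mathcal D)$ is the set of integers $c$ with $\Pr(C_i=c)>0$ for some $i\ge0$. *)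

theory Defs
  imports "HOL-Probability.Probability_Mass_Function"
begin

fun digit_sum_dist :: "int set \<Rightarrow> nat \<Rightarrow> int pmf" where
  "digit_sum_dist D 0 = return_pmf 0"
| "digit_sum_dist D (Suc k) =
     bind_pmf (pmf_of_set D) (\<lambda>x. map_pmf (\<lambda>s. x + s) (digit_sum_dist D k))"

definition carry_digit :: "int \<Rightarrow> int set \<Rightarrow> int \<Rightarrow> int" where
  "carry_digit b D v = (THE a. a \<in> D \<and> a mod b = v mod b)"

definition carry_step :: "int \<Rightarrow> int set \<Rightarrow> nat \<Rightarrow> int \<Rightarrow> int pmf" where
  "carry_step b D n c =
     map_pmf (\<lambda>s. (c + s - carry_digit b D (c + s)) div (- b)) (digit_sum_dist D n)"

text \<open>Distribution of C_i (the X_{k,i} are independent across k and i, so C is a Markov chain).\<close>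
fun carry_dist :: "int \<Rightarrow> int set \<Rightarrow> nat \<Rightarrow> nat \<Rightarrow> int pmf" where
  "carry_dist b D n 0 = return_pmf 0"
| "carry_dist b D n (Suc i) = bind_pmf (carry_dist b D n i) (carry_step b D n)"

definition state_space :: "int \<Rightarrow> int set \<Rightarrow> nat \<Rightarrow> int set" where
  "state_space b D n = {c. \<exists>i. pmf (carry_dist b D n i) c > 0}"

end

theory Submission
  imports Defs
begin

text \<open>
  The support of \<open>C\<^sub>i\<close> is an integer interval \<open>[A\<^sub>i, B\<^sub>i]\<close>: the successors of a carry
  \<open>c\<close> form an interval whose ends are decreasing floor-division functions of \<open>c\<close>, so one
  step maps \<open>[A, B]\<close> to \<open>[min_successor B, max_successor A]\<close>. Starting from \<open>{0}\<close> these
  intervals grow and never leave \<open>[s, t]\<close>. With \<open>\<alpha> = A - s\<close>, \<open>\<beta> = t - B\<close> and \<open>r\<close> the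
  remainder of \<open>(n - 1)(-d - b)\<close> modulo \<open>b + 1\<close>, one step gives
  \<open>b \<alpha>' \<le> \<beta> + r - [r \<noteq> 0]\<close> and \<open>b \<beta>' \<le> \<alpha> - r + b [r \<noteq> 0]\<close>, so the integer
  potential \<open>\<alpha> + \<beta>\<close> strictly decreases until it vanishes, i.e. until the support is
  \<open>[s, t]\<close>. Finally \<open>t - s = \<lceil>(n - 1) l\<rceil> - \<lfloor>(n - 1) l\<rfloor> + n - 1\<close>.
\<close>

lemma int_le_div_iff: "0 < b \<Longrightarrow> k \<le> x div b \<longleftrightarrow> b * k \<le> x" for b k x :: int
  by (smt (verit) mod_mult_div_eq nonzero_mult_div_cancel_left pos_mod_sign zdiv_mono1)

lemma int_div_le_iff: "0 < b \<Longrightarrow> x div b \<le> k \<longleftrightarrow> x < b * (k + 1)" for b k x :: int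
  using int_le_div_iff[of b "k + 1" x] by auto

lemma ceiling_eq_floor_add_of_bool: "\<lceil>x\<rceil> = \<lfloor>x\<rfloor> + of_bool (x \<notin> \<int>)"
  for x :: "'a::floor_ceiling"
  by (auto simp: ceiling_altdef elim!: Ints_cases) (metis Ints_of_int)

lemma UN_atLeastAtMost_shift:
  fixes a a' c c' :: int
  assumes "a \<le> a'" "c \<le> c'"
  shows "(\<Union>x\<in>{a..a'}. {c + x..c' + x}) = {a + c..a' + c'}"
proof
  show "(\<Union>x\<in>{a..a'}. {c + x..c' + x}) \<subseteq> {a + c..a' + c'}"
    by auto
  show "{a + c..a' + c'} \<subseteq> (\<Union>x\<in>{a..a'}. {c + x..c' + x})"
  proof
    fix z assume z: "z \<in> {a + c..a' + c'}"
    define x where "x = max a (z - c')"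
    have "x \<in> {a..a'}" "z \<in> {c + x..c' + x}"
      using z assms unfolding x_def by auto
    then show "z \<in> (\<Union>x\<in>{a..a'}. {c + x..c' + x})"
      by blast
  qed
qed

lemma image_div_atLeastAtMost:
  fixes b L U :: int
  assumes "0 < b" "L \<le> U"
  shows "(\<lambda>x. x div b) ` {L..U} = {L div b..U div b}"
proof
  show "(\<lambda>x. x div b) ` {L..U} \<subseteq> {L div b..U div b}"
    using assms by (auto intro: zdiv_mono1)
  show "{L div b..U div b} \<subseteq> (\<lambda>x. x div b) ` {L..U}"
  proof
    fix y assume y: "y \<in> {L div b..U div b}"
    define x where "x = max L (b * y)"
    have "L < b * (y + 1)" "b * y \<le> U"
      using y int_div_le_iff[OF assms(1)] int_le_div_iff[OF assms(1)] by auto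
    then have "x div b = y" "x \<in> {L..U}"
      using assms unfolding x_def
      by (auto simp: max_def int_div_le_iff int_le_div_iff algebra_simps intro!: order.antisym)
    then show "y \<in> (\<lambda>x. x div b) ` {L..U}"
      by (intro image_eqI[of _ _ x]) auto
  qed
qed

lemma image_neg_div_atLeastAtMost:
  fixes b c L U :: int
  assumes "0 < b" "L \<le> U"
  shows "(\<lambda>v. - ((v - c) div b)) ` {L..U} = {- ((U - c) div b)..- ((L - c) div b)}"
proof -
  have "(\<lambda>v. - ((v - c) div b)) ` {L..U} = uminus ` (\<lambda>x. x div b) ` (\<lambda>v. v - c) ` {L..U}"
    by (simp only: image_image)
  then show ?thesis
    using assms by (simp add: image_div_atLeastAtMost)
qed

lemma set_pmf_digit_sum_dist:
  fixes d e :: int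
  assumes "d \<le> e"
  shows "set_pmf (digit_sum_dist {d..e} k) = {int k * d..int k * e}"
proof (induction k)
  case 0
  then show ?case by simp
next
  case (Suc k)
  have "int k * d \<le> int k * e"
    using assms by (simp add: mult_left_mono)
  then have "set_pmf (digit_sum_dist {d..e} (Suc k)) = {d + int k * d..e + int k * e}"
    using assms Suc by (simp add: UN_atLeastAtMost_shift)
  then show ?case
    by (simp add: algebra_simps)
qed

lemma carry_digit_atLeastAtMost:
  fixes b d v :: int
  assumes "0 < b"
  shows "carry_digit b {d..d + b - 1} v = d + (v - d) mod b"
  unfolding carry_digit_def
proof (rule the_equality)
  have "(d + (v - d) mod b) mod b = v mod b"
    by (metis add.commute diff_add_cancel mod_add_right_eq)
  then show "d + (v - d) mod b \<in> {d..d + b - 1} \<and> (d + (v - d) mod b) mod b = v mod b"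
    using assms pos_mod_bound[of b "v - d"] pos_mod_sign[of b "v - d"] by auto
next
  fix a assume a: "a \<in> {d..d + b - 1} \<and> a mod b = v mod b"
  then have "(v - d) mod b = (a - d) mod b"
    by (metis mod_diff_cong)
  also have "\<dots> = a - d"
    using a by (intro mod_pos_pos_trivial) auto
  finally show "a = d + (v - d) mod b"
    by simp
qed

lemma carry_step_value:
  fixes b d v :: int
  assumes "0 < b"
  shows "(v - carry_digit b {d..d + b - 1} v) div (- b) = - ((v - d) div b)"
proof -
  have "v - carry_digit b {d..d + b - 1} v = b * ((v - d) div b)"
    using carry_digit_atLeastAtMost[OF assms] minus_mod_eq_mult_div[of "v - d" b] by simp
  then show ?thesis
    using assms by (simp add: div_minus_right flip: mult_minus_right)
qed

lemma potential_decreases: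
  fixes b r \<alpha> \<beta> \<alpha>' \<beta>' :: int
  assumes "b \<ge> 2" "0 \<le> r" "r \<le> b" "0 \<le> \<alpha>" "0 \<le> \<beta>" "\<alpha>' \<le> \<alpha>" "\<beta>' \<le> \<beta>" "0 < \<alpha> + \<beta>"
    and "b * \<alpha>' \<le> \<beta> + r - of_bool (r \<noteq> 0)"
    and "b * \<beta>' \<le> \<alpha> - r + b * of_bool (r \<noteq> 0)"
  shows "\<alpha>' + \<beta>' < \<alpha> + \<beta>"
proof (rule ccontr)
  assume "\<not> ?thesis"
  then have "\<alpha>' = \<alpha>" "\<beta>' = \<beta>"
    using assms by auto
  then have "(b - 1) * (\<alpha> + \<beta>) \<le> (b - 1) * of_bool (r \<noteq> 0)"
    using assms by (simp add: algebra_simps)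
  then have "\<alpha> + \<beta> \<le> of_bool (r \<noteq> 0)"
    using assms(1) by (simp add: mult_le_cancel_left)
  then have "r \<noteq> 0" "\<alpha> + \<beta> = 1"
    using assms(8) by (cases "r = 0"; simp)+
  then consider "\<alpha> = 1" "\<beta> = 0" | "\<alpha> = 0" "\<beta> = 1"
    using assms(4,5) by linarith
  then show False
    using assms \<open>\<alpha>' = \<alpha>\<close> \<open>\<beta>' = \<beta>\<close> \<open>r \<noteq> 0\<close> by cases auto
qed

lemma nonneg_int_seq_reaches_zero:
  fixes f :: "nat \<Rightarrow> int"
  assumes "\<And>i. 0 \<le> f i" and "\<And>i. 0 < f i \<Longrightarrow> f (Suc i) < f i"
  shows "\<exists>N. f N = 0"
proof (rule ccontr)
  assume "\<nexists>N. f N = 0"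
  then have pos: "0 < f i" for i
    using assms(1) by (metis order_le_less)
  have "f i \<le> f 0 - int i" for i
  proof (induction i)
    case (Suc i)
    then show ?case
      using assms(2)[OF pos[of i]] by simp
  qed simp
  from this[of "Suc (nat (f 0))"] show False
    using pos[of "Suc (nat (f 0))"] assms(1)[of 0] by simp
qed

text \<open>
  Here \<open>m = n - 1\<close>; \<open>smin\<close> and \<open>smax\<close> are \<open>s = \<lfloor>m l\<rfloor>\<close> and \<open>t = \<lceil>m l\<rceil> + m\<close> written with
  integer division, and \<open>rem\<close> is \<open>m (-d - b) mod (b + 1)\<close>.
\<close>

locale negabase_carries =
  fixes b d :: int and m :: nat
  assumes base: "b \<ge> 2" and zero_digit: "d \<le> 0" "0 \<le> d + b - 1"
begin

abbreviation digits :: "int set" where "digits \<equiv> {d..d + b - 1}"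

definition min_successor :: "int \<Rightarrow> int" where
  "min_successor B = - ((B + int (Suc m) * (d + b - 1) - d) div b)"

definition max_successor :: "int \<Rightarrow> int" where
  "max_successor A = - ((A + int (Suc m) * d - d) div b)"

fun support_min :: "nat \<Rightarrow> int" and support_max :: "nat \<Rightarrow> int" where
  "support_min 0 = 0"
| "support_max 0 = 0"
| "support_min (Suc i) = min_successor (support_max i)"
| "support_max (Suc i) = max_successor (support_min i)"

definition smin :: int where "smin = (- int m * (d + b)) div (b + 1)"

definition smax :: int where "smax = int m - (int m * (d + b)) div (b + 1)"

definition rem :: int where "rem = (- int m * (d + b)) mod (b + 1)"

lemma b_pos: "0 < b"
  using base by simp

lemma min_successor_antimono: "B \<le> B' \<Longrightarrow> min_successor B' \<le> min_successor B"
  unfolding min_successor_def using b_pos by (simp add: zdiv_mono1)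

lemma max_successor_antimono: "A \<le> A' \<Longrightarrow> max_successor A' \<le> max_successor A"
  unfolding max_successor_def using b_pos by (simp add: zdiv_mono1)

lemma support_mono: "support_min (Suc i) \<le> support_min i \<and> support_max i \<le> support_max (Suc i)"
proof (induction i)
  case 0
  have "0 \<le> int (Suc m) * (d + b - 1)" "int m * d \<le> 0"
    using zero_digit by (simp_all add: mult_nonneg_nonpos)
  then have "0 \<le> int (Suc m) * (d + b - 1) - d" "int (Suc m) * d - d \<le> 0"
    using zero_digit by (simp_all add: algebra_simps)
  then show ?case
    using b_pos by (simp add: min_successor_def max_successor_def int_le_div_iff int_div_le_iff)
next
  case (Suc i)
  then show ?case
    by (simp add: min_successor_antimono max_successor_antimono)
qed

lemma support_min_le_support_max: "support_min i \<le> support_max i"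
proof -
  have "support_min i \<le> 0 \<and> 0 \<le> support_max i"
  proof (induction i)
    case (Suc i)
    then show ?case
      using support_mono[of i] by linarith
  qed simp
  then show ?thesis by simp
qed

lemma set_pmf_carry_dist:
  "set_pmf (carry_dist b digits (Suc m) i) = {support_min i..support_max i}"
proof (induction i)
  case 0
  then show ?case by simp
next
  case (Suc i)
  define f where "f v = - ((v - d) div b)" for v
  have digit_sum_le: "int (Suc m) * d \<le> int (Suc m) * (d + b - 1)"
    using base by (simp add: mult_left_mono)
  have digit_sums: "set_pmf (digit_sum_dist digits (Suc m)) = {int (Suc m) * d..int (Suc m) * (d + b - 1)}"
    using base by (intro set_pmf_digit_sum_dist) simp
  have step: "set_pmf (carry_step b digits (Suc m) c) = f ` (\<lambda>S. c + S) ` set_pmf (digit_sum_dist digits (Suc m))" for c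
    unfolding carry_step_def f_def using carry_step_value[OF b_pos] by (simp add: image_image)
  have "set_pmf (carry_dist b digits (Suc m) (Suc i))
      = f ` (\<Union>c\<in>{support_min i..support_max i}. (\<lambda>S. c + S) ` {int (Suc m) * d..int (Suc m) * (d + b - 1)})"
    using Suc by (simp add: step digit_sums image_UN del: digit_sum_dist.simps)
  also have "\<dots> = f ` {support_min i + int (Suc m) * d..support_max i + int (Suc m) * (d + b - 1)}"
    using support_min_le_support_max digit_sum_le by (simp add: UN_atLeastAtMost_shift)
  also have "\<dots> = {support_min (Suc i)..support_max (Suc i)}"
    using b_pos support_min_le_support_max[of i] digit_sum_le unfolding f_def
    by (subst image_neg_div_atLeastAtMost) (simp_all add: min_successor_def max_successor_def algebra_simps)
  finally show ?case .
qed

lemma rem_bounds: "0 \<le> rem" "rem \<le> b"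
  using b_pos pos_mod_bound[of "b + 1"] pos_mod_sign[of "b + 1"] unfolding rem_def by auto

lemma smax_eq: "smax = smin + of_bool (rem \<noteq> 0) + int m"
  using b_pos zdiv_zminus1_eq_if[of "b + 1" "int m * (d + b)"]
  unfolding smax_def smin_def rem_def by (simp flip: dvd_eq_mod_eq_0)

lemma smin_rem: "- int m * (d + b) = (b + 1) * smin + rem"
  unfolding smin_def rem_def by simp

lemma min_successor_eq: "min_successor B = smin - (b - 1 + of_bool (rem \<noteq> 0) - rem - (smax - B)) div b"
proof -
  have "B + int (Suc m) * (d + b - 1) - d = (b - 1 + of_bool (rem \<noteq> 0) - rem - (smax - B)) + b * (- smin)"
    using smax_eq smin_rem by (simp add: algebra_simps)
  then show ?thesis
    using b_pos unfolding min_successor_def by (simp only: div_mult_self2)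
qed

lemma max_successor_eq: "max_successor A = smax - of_bool (rem \<noteq> 0) - (A - smin - rem) div b"
proof -
  have "A + int (Suc m) * d - d = (A - smin - rem) + b * (- (smin + int m))"
    using smin_rem by (simp add: algebra_simps)
  then show ?thesis
    using b_pos smax_eq unfolding max_successor_def by (simp only: div_mult_self2)
qed

lemma min_successor_bounds:
  assumes "B \<le> smax"
  shows "smin \<le> min_successor B" "b * (min_successor B - smin) \<le> (smax - B) + rem - of_bool (rem \<noteq> 0)"
proof -
  define X where "X = b - 1 + of_bool (rem \<noteq> 0) - rem - (smax - B)"
  have "X < b"
    using assms rem_bounds unfolding X_def by auto
  then show "smin \<le> min_successor B"
    using b_pos unfolding min_successor_eq X_def[symmetric] by (simp add: int_div_le_iff)
  have "X < b * (X div b + 1)"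
    using b_pos int_div_le_iff by blast
  then show "b * (min_successor B - smin) \<le> (smax - B) + rem - of_bool (rem \<noteq> 0)"
    unfolding min_successor_eq X_def[symmetric] by (simp add: X_def algebra_simps)
qed

lemma max_successor_bounds:
  assumes "smin \<le> A"
  shows "max_successor A \<le> smax" "b * (smax - max_successor A) \<le> (A - smin) - rem + b * of_bool (rem \<noteq> 0)"
proof -
  define Y where "Y = A - smin - rem"
  have "b * (- of_bool (rem \<noteq> 0)) \<le> Y"
    using assms rem_bounds unfolding Y_def by auto
  then show "max_successor A \<le> smax"
    using b_pos unfolding max_successor_eq Y_def[symmetric] by (simp add: int_le_div_iff)
  have "b * (Y div b) \<le> Y"
    using b_pos int_le_div_iff by blast
  then show "b * (smax - max_successor A) \<le> (A - smin) - rem + b * of_bool (rem \<noteq> 0)"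
    unfolding max_successor_eq Y_def[symmetric] by (simp add: Y_def algebra_simps)
qed

lemma support_within: "smin \<le> support_min i \<and> support_max i \<le> smax"
proof (induction i)
  case 0
  have "- int m * (d + b) \<le> 0" "- int m * (b + 1) \<le> - int m * (d + b)"
    using zero_digit by (simp_all add: mult_left_mono)
  then have "smin \<le> 0" "- int m \<le> smin"
    using b_pos unfolding smin_def by (simp_all add: int_div_le_iff int_le_div_iff algebra_simps)
  then show ?case
    using smax_eq by simp
next
  case (Suc i)
  then show ?case
    using min_successor_bounds(1) max_successor_bounds(1) by simp
qed

lemma support_reaches_bounds: "\<exists>N. support_min N = smin \<and> support_max N = smax"
proof -
  define \<Phi> where "\<Phi> i = (support_min i - smin) + (smax - support_max i)" for i
  have "\<Phi> (Suc i) < \<Phi> i" if "0 < \<Phi> i" for i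
  proof -
    have within: "smin \<le> support_min i" "support_max i \<le> smax"
      using support_within by auto
    have "(min_successor (support_max i) - smin) + (smax - max_successor (support_min i))
        < (support_min i - smin) + (smax - support_max i)"
    proof (rule potential_decreases[OF base rem_bounds])
      show "b * (min_successor (support_max i) - smin) \<le> (smax - support_max i) + rem - of_bool (rem \<noteq> 0)"
        using within(2) by (rule min_successor_bounds(2))
      show "b * (smax - max_successor (support_min i)) \<le> (support_min i - smin) - rem + b * of_bool (rem \<noteq> 0)"
        using within(1) by (rule max_successor_bounds(2))
    qed (use within that support_mono[of i] in \<open>simp_all add: \<Phi>_def\<close>)
    then show ?thesis
      by (simp add: \<Phi>_def)
  qed
  moreover have "0 \<le> \<Phi> i" for i
    using support_within[of i] unfolding \<Phi>_def by simp
  ultimately obtain N where "\<Phi> N = 0"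
    using nonneg_int_seq_reaches_zero by blast
  then show ?thesis
    using support_within[of N] unfolding \<Phi>_def by (intro exI[of _ N]) simp
qed

lemma state_space_eq: "state_space b digits (Suc m) = {smin..smax}"
proof -
  obtain N where N: "support_min N = smin" "support_max N = smax"
    using support_reaches_bounds by blast
  have "state_space b digits (Suc m) = (\<Union>i. {support_min i..support_max i})"
    unfolding state_space_def pmf_positive_iff set_pmf_carry_dist by blast
  also have "\<dots> = {smin..smax}"
  proof
    show "(\<Union>i. {support_min i..support_max i}) \<subseteq> {smin..smax}"
      using support_within by (intro UN_least) simp
    show "{smin..smax} \<subseteq> (\<Union>i. {support_min i..support_max i})"
      using UN_upper[of N UNIV "\<lambda>i. {support_min i..support_max i}"] N by simp
  qed
  finally show ?thesis .
qed

end

theorem lemma6: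
  fixes b d :: int and n :: nat
  assumes "b \<ge> 2" and "n \<ge> 1"
    and "D = {d..d + b - 1}" and "0 \<in> D"
    and "l = real_of_int (- d - b) / real_of_int (b + 1)"
    and "s = - \<lceil>real (n - 1) * (- l)\<rceil>"
    and "t = \<lceil>real (n - 1) * (l + 1)\<rceil>"
  shows "s = \<lfloor>real (n - 1) * l\<rfloor>
     \<and> state_space b D n = {s..t}
     \<and> card (state_space b D n) = (if real (n - 1) * l \<in> \<int> then n else n + 1)"
proof -
  obtain m where n: "n = Suc m"
    using assms(2) by (cases n) auto
  interpret negabase_carries b d m
    using assms(1,3,4) by unfold_locales auto
  define x where "x = real (n - 1) * l"
  have x: "x = real_of_int (- int m * (d + b)) / real_of_int (b + 1)"
    unfolding x_def assms(5) n by (simp add: algebra_simps)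
  have floor_x: "\<lfloor>x\<rfloor> = smin" and ceiling_x: "\<lceil>x\<rceil> = smax - int m"
    unfolding x smin_def smax_def floor_divide_of_int_eq ceiling_divide_eq_div by simp_all
  have s_eq: "s = \<lfloor>x\<rfloor>"
    using assms(6) unfolding x_def ceiling_def by simp
  have "real (n - 1) * (l + 1) = x + of_int (int m)"
    unfolding x_def n by (simp add: algebra_simps)
  then have t_eq: "t = \<lceil>x\<rceil> + int m"
    using assms(7) by (simp only: ceiling_add_of_int)
  show ?thesis
    using s_eq t_eq ceiling_eq_floor_add_of_bool[of x] state_space_eq floor_x ceiling_x assms(3) n
    unfolding x_def by auto
qed

end
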